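(* Let $z_i=(x_i,y_i)$, $i=1,\dots,n$, be training data with $y_i\in\mathbb{R}$, and let $\ell(a,b)$ be a loss function that is continuous and differentiable almost everywhere, with $\ell'(a,b)=\partial\ell(a,b)/\partial b$. Index by $b$ the $B=n^n$ bootstrap samples (ordered $n$-tuples of indices in $\{1,\dots,n\}$), and for each $b$ let $\widehat{y_j}^{(b)}$ be the prediction for observation $j$ of the tree grown on sample $b$, assumed to be a deterministic function of $b$. Let $N_i^{(b)}$ be the number of times observation $i$ occurs in sample $b$ and $I_j^{(b)}=\mathbf{1}(N_j^{(b)}=0)$. For a weight vector $W=(w_1,\dots,w_n)$ with $\sum_i w_i=1$, let $g_W(b)$ be the probability of drawing bootstrap sample $b$ when each of the $n$ draws selects observation $k$ with probability $w_k$, and define $$S(\hat F_W)=\sum_{j=1}^n w_j\,\ell\!\left(y_j,\ \frac{\sum_b \widehat{y_j}^{(b)} I_j^{(b)} g_W(b)}{\sum_b I_j^{(b)} g_W(b)}\right).$$ Let $\hat F=\hat F_{W_0}$ with $W_0=(1/n,\dots,1/n)$, so $S(\hat F)=\frac1n\sum_j\ell(y_j,\widehat{y_j}^{\mathrm{OOB}})$ where $\widehat{y_j}^{\mathrm{OOB}}=\frac{\sum_b \widehat{y_j}^{(b)}I_j^{(b)}}{\sum_b I_j^{(b)}}$. For $\varepsilon$ near $0$ let $\hat F_{\varepsilon,i}$ put weight $\frac{1-\varepsilon}{n}+\varepsilon$ on $z_i$ and $\frac{1-\varepsilon}{n}$ on each $z_j$, $j\neq i$, and define $\hat D_i=\frac1n\frac{\partial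 S(\hat F_{\varepsilon,i})}{\partial\varepsilon}\big|_{\varepsilon=0}$. Then, with $e_n=(1-1/n)^{-n}$, $$\hat D_i=\frac1n\left\{\ell(y_i,\widehat{y_i}^{\mathrm{OOB}})-\frac1n\sum_j\ell(y_j,\widehat{y_j}^{\mathrm{OOB}})\right\}+\frac{e_n}{n}\sum_j \ell'(y_j,\widehat{y_j}^{\mathrm{OOB}})\left\{\frac1B\sum_b (N_i^{(b)}-1)I_j^{(b)}\big(\widehat{y_j}^{(b)}-\widehat{y_j}^{\mathrm{OOB}}\big)\right\}.$$
   Context: This is the out-of-bag (OOB) error of a bagged ensemble of trees under a general loss $\ell$, viewed as a functional $S$ of a weighted empirical distribution on the training data; $\hat D_i$ is $1/n$ times the empirical influence function of $S$. All sums over $b$ range over all $B=n^n$ bootstrap samples. *)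

theory Defs
  imports "HOL-Analysis.Analysis" "HOL-Library.FuncSet"
begin

text \<open>Observations are indexed 0..n-1. A bootstrap sample is an ordered n-tuple of
indices, i.e. a function from draw positions {0..<n} to observation indices {0..<n}.\<close>

definition boot :: "nat \<Rightarrow> (nat \<Rightarrow> nat) set" where
  "boot n = {0..<n} \<rightarrow>\<^sub>E {0..<n}"

definition Ncount :: "nat \<Rightarrow> (nat \<Rightarrow> nat) \<Rightarrow> nat \<Rightarrow> nat" where
  "Ncount n b i = card {k \<in> {0..<n}. b k = i}"

definition Iout :: "nat \<Rightarrow> (nat \<Rightarrow> nat) \<Rightarrow> nat \<Rightarrow> real" where
  "Iout n b j = (if Ncount n b j = 0 then 1 else 0)"

definition gW :: "nat \<Rightarrow> (nat \<Rightarrow> real) \<Rightarrow> (nat \<Rightarrow> nat) \<Rightarrow> real" where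
  "gW n w b = (\<Prod>k<n. w (b k))"

definition S_W :: "nat \<Rightarrow> (real \<Rightarrow> real \<Rightarrow> real) \<Rightarrow> (nat \<Rightarrow> real)
    \<Rightarrow> ((nat \<Rightarrow> nat) \<Rightarrow> nat \<Rightarrow> real) \<Rightarrow> (nat \<Rightarrow> real) \<Rightarrow> real" where
  "S_W n loss y yhat w =
     (\<Sum>j<n. w j * loss (y j)
        ((\<Sum>b\<in>boot n. yhat b j * Iout n b j * gW n w b) /
         (\<Sum>b\<in>boot n. Iout n b j * gW n w b)))"

definition yOOB :: "nat \<Rightarrow> ((nat \<Rightarrow> nat) \<Rightarrow> nat \<Rightarrow> real) \<Rightarrow> nat \<Rightarrow> real" where
  "yOOB n yhat j =
     (\<Sum>b\<in>boot n. yhat b j * Iout n b j) / (\<Sum>b\<in>boot n. Iout n b j)"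

definition W_eps :: "nat \<Rightarrow> nat \<Rightarrow> real \<Rightarrow> nat \<Rightarrow> real" where
  "W_eps n i \<epsilon> k = (1 - \<epsilon>) / real n + (if k = i then \<epsilon> else 0)"

end

theory Submission
  imports Defs
begin

text \<open>At \<open>\<epsilon> = 0\<close> all weights equal \<open>1/n\<close>, so every bootstrap sample has probability
\<open>n^-n\<close>, and \<open>d g_W(b) / d\<epsilon> = n^(1-n) (N_i(b) - 1)\<close>: each draw of \<open>i\<close> gains \<open>1 - 1/n\<close>
and every draw loses \<open>1/n\<close>. The out-of-bag prediction is a \<open>g_W\<close>-weighted mean over the
\<open>(n-1)^n\<close> samples leaving \<open>j\<close> out, and perturbing equal weights moves such a mean by the
covariance of the weight derivatives with the centred values; here this is the covariance of
\<open>N_i(b) - 1\<close> with the centred tree predictions, and \<open>n^n / (n-1)^n = e_n\<close>.\<close>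

lemma gW_has_real_derivative:
  assumes "\<And>k. ((\<lambda>\<epsilon>. w \<epsilon> k) has_real_derivative w' k) (at 0)"
    and "\<And>k. w 0 k = c"
  shows "((\<lambda>\<epsilon>. gW n (w \<epsilon>) b) has_real_derivative c ^ (n - 1) * (\<Sum>k<n. w' (b k))) (at 0)"
proof -
  have "((\<lambda>\<epsilon>. \<Prod>k<n. w \<epsilon> (b k)) has_real_derivative
          (\<Sum>k<n. w' (b k) * (\<Prod>l\<in>{..<n} - {k}. w 0 (b l)))) (at 0)"
    by (rule has_field_derivative_prod) (use assms(1) in auto)
  then show ?thesis
    unfolding gW_def assms(2) by (simp add: card_Diff_singleton sum_distrib_left mult_ac)
qed

lemma weighted_mean_0:
  fixes f v g :: "'b \<Rightarrow> real"
  assumes "\<And>b. b \<in> B \<Longrightarrow> g b = c" and "c \<noteq> 0"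
  shows "(\<Sum>b\<in>B. f b * v b * g b) / (\<Sum>b\<in>B. v b * g b) = (\<Sum>b\<in>B. f b * v b) / (\<Sum>b\<in>B. v b)"
proof -
  have "(\<Sum>b\<in>B. f b * v b * g b) = (\<Sum>b\<in>B. f b * v b) * c"
    using assms(1) by (simp add: sum_distrib_right)
  moreover have "(\<Sum>b\<in>B. v b * g b) = (\<Sum>b\<in>B. v b) * c"
    using assms(1) by (simp add: sum_distrib_right)
  ultimately show ?thesis
    using assms(2) by simp
qed

lemma weighted_mean_has_real_derivative:
  fixes f v :: "'b \<Rightarrow> real" and g :: "real \<Rightarrow> 'b \<Rightarrow> real"
  assumes "finite B"
    and g': "\<And>b. b \<in> B \<Longrightarrow> ((\<lambda>\<epsilon>. g \<epsilon> b) has_real_derivative g' b) (at 0)"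
    and g0: "\<And>b. b \<in> B \<Longrightarrow> g 0 b = c" and "c \<noteq> 0" and "(\<Sum>b\<in>B. v b) \<noteq> 0"
  defines "m \<equiv> (\<Sum>b\<in>B. f b * v b) / (\<Sum>b\<in>B. v b)"
  shows "((\<lambda>\<epsilon>. (\<Sum>b\<in>B. f b * v b * g \<epsilon> b) / (\<Sum>b\<in>B. v b * g \<epsilon> b)) has_real_derivative
           (\<Sum>b\<in>B. v b * g' b * (f b - m)) / (c * (\<Sum>b\<in>B. v b))) (at 0)"
proof -
  define X where "X = (\<Sum>b\<in>B. f b * v b * g' b)"
  define Y where "Y = (\<Sum>b\<in>B. v b * g' b)"
  have A0: "(\<Sum>b\<in>B. f b * v b * g 0 b) = (\<Sum>b\<in>B. f b * v b) * c"
    using g0 by (simp add: sum_distrib_right)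
  have C0: "(\<Sum>b\<in>B. v b * g 0 b) = (\<Sum>b\<in>B. v b) * c"
    using g0 by (simp add: sum_distrib_right)
  have "((\<lambda>\<epsilon>. (\<Sum>b\<in>B. f b * v b * g \<epsilon> b) / (\<Sum>b\<in>B. v b * g \<epsilon> b)) has_real_derivative
          (X * ((\<Sum>b\<in>B. v b) * c) - (\<Sum>b\<in>B. f b * v b) * c * Y) /
          ((\<Sum>b\<in>B. v b) * c * ((\<Sum>b\<in>B. v b) * c))) (at 0)"
    unfolding X_def Y_def A0[symmetric] C0[symmetric]
    using assms(4,5) C0 by (intro DERIV_divide DERIV_sum DERIV_cmult g') simp_all
  moreover have "(\<Sum>b\<in>B. v b * g' b * (f b - m)) = X - m * Y"
    unfolding X_def Y_def by (simp add: sum_subtractf sum_distrib_left algebra_simps)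
  moreover have "(X * (T * c) - F * c * Y) / (T * c * (T * c)) = (X - F / T * Y) / (c * T)"
    if "c * T \<noteq> 0" for F T :: real
    using that by (simp add: field_simps)
  ultimately show ?thesis
    unfolding m_def using assms(4,5) by simp
qed

lemma one_minus_inverse_powr_minus:
  assumes "n \<ge> 2"
  shows "(1 - 1 / real n) powr (- real n) = real n ^ n / real (n - 1) ^ n"
proof -
  have "1 - 1 / real n = real (n - 1) / real n"
    using assms by (simp add: field_simps of_nat_diff)
  moreover have "real (n - 1) > 0"
    using assms by simp
  ultimately show ?thesis
    using assms by (simp add: powr_minus powr_realpow power_divide)
qed

lemma finite_boot: "finite (boot n)"
  unfolding boot_def by (simp add: finite_PiE)

lemma sum_Iout_boot:
  assumes "j < n"
  shows "(\<Sum>b\<in>boot n. Iout n b j) = real (n - 1) ^ n"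
proof -
  have "(\<Sum>b\<in>boot n. Iout n b j) = real (card (boot n \<inter> {b. Ncount n b j = 0}))"
    unfolding Iout_def using finite_boot by (simp add: sum.If_cases)
  also have "boot n \<inter> {b. Ncount n b j = 0} = {0..<n} \<rightarrow>\<^sub>E ({0..<n} - {j})"
    unfolding boot_def Ncount_def by (auto simp: PiE_iff)
  finally show ?thesis
    using assms by (simp add: card_PiE)
qed

lemma sum_W_eps_derivative_eq_Ncount:
  assumes "n > 0"
  shows "(\<Sum>k<n. (if b k = i then 1 else 0) - 1 / real n) = real (Ncount n b i) - 1"
proof -
  have "(\<Sum>k<n. if b k = i then 1 else 0 :: real) = real (card {k \<in> {..<n}. b k = i})"
    by (simp add: sum.If_cases Int_def conj_commute)
  then show ?thesis
    using assms by (simp add: sum_subtractf Ncount_def atLeast0LessThan)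
qed

lemma W_eps_has_real_derivative:
  "((\<lambda>\<epsilon>. W_eps n i \<epsilon> k) has_real_derivative (if k = i then 1 else 0) - 1 / real n) (at 0)"
proof -
  have common: "((\<lambda>\<epsilon>. (1 - \<epsilon>) / real n) has_real_derivative - 1 / real n) (at 0)"
    using DERIV_cdivide[OF DERIV_diff[OF DERIV_const DERIV_ident]] by simp
  show ?thesis
    unfolding W_eps_def
    by (rule DERIV_cong, rule DERIV_add[OF common]) (auto intro: DERIV_ident DERIV_const)
qed

lemma W_eps_0: "W_eps n i 0 k = 1 / real n"
  by (simp add: W_eps_def)

lemma gW_W_eps_0: "gW n (W_eps n i 0) b = (1 / real n) ^ n"
  by (simp add: gW_def W_eps_0)

lemma gW_W_eps_has_real_derivative:
  assumes "n > 0"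
  shows "((\<lambda>\<epsilon>. gW n (W_eps n i \<epsilon>) b) has_real_derivative
           (1 / real n) ^ (n - 1) * (real (Ncount n b i) - 1)) (at 0)"
  using gW_has_real_derivative[where w = "W_eps n i" and c = "1 / real n" and n = n and b = b,
      OF W_eps_has_real_derivative]
  by (simp add: W_eps_0 sum_W_eps_derivative_eq_Ncount[OF assms])

definition yOOB_W :: "nat \<Rightarrow> ((nat \<Rightarrow> nat) \<Rightarrow> nat \<Rightarrow> real) \<Rightarrow> (nat \<Rightarrow> real) \<Rightarrow> nat \<Rightarrow> real" where
  "yOOB_W n yhat w j =
     (\<Sum>b\<in>boot n. yhat b j * Iout n b j * gW n w b) / (\<Sum>b\<in>boot n. Iout n b j * gW n w b)"

lemma S_W_eq_yOOB_W: "S_W n loss y yhat w = (\<Sum>j<n. w j * loss (y j) (yOOB_W n yhat w j))"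
  by (simp add: S_W_def yOOB_W_def)

lemma yOOB_W_W_eps_0:
  assumes "n > 0"
  shows "yOOB_W n yhat (W_eps n i 0) j = yOOB n yhat j"
  unfolding yOOB_W_def yOOB_def using assms
  by (intro weighted_mean_0[where c = "(1 / real n) ^ n"]) (simp_all add: gW_W_eps_0)

lemma yOOB_W_W_eps_has_real_derivative:
  assumes "n \<ge> 2" and "j < n"
  shows "((\<lambda>\<epsilon>. yOOB_W n yhat (W_eps n i \<epsilon>) j) has_real_derivative
           real n * (\<Sum>b\<in>boot n. (real (Ncount n b i) - 1) * Iout n b j * (yhat b j - yOOB n yhat j))
           / real (n - 1) ^ n) (at 0)"
proof -
  have n0: "n > 0"
    using assms(1) by simp
  have "((\<lambda>\<epsilon>. yOOB_W n yhat (W_eps n i \<epsilon>) j) has_real_derivative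
           (\<Sum>b\<in>boot n. Iout n b j * ((1 / real n) ^ (n - 1) * (real (Ncount n b i) - 1)) *
              (yhat b j - yOOB n yhat j)) / ((1 / real n) ^ n * real (n - 1) ^ n)) (at 0)"
    unfolding yOOB_W_def yOOB_def sum_Iout_boot[OF assms(2), symmetric]
    using n0 assms by (intro weighted_mean_has_real_derivative finite_boot
        gW_W_eps_has_real_derivative gW_W_eps_0) (simp_all add: sum_Iout_boot)
  moreover have "(\<Sum>b\<in>boot n. Iout n b j * ((1 / real n) ^ (n - 1) * (real (Ncount n b i) - 1)) *
      (yhat b j - yOOB n yhat j)) = (1 / real n) ^ (n - 1) *
      (\<Sum>b\<in>boot n. (real (Ncount n b i) - 1) * Iout n b j * (yhat b j - yOOB n yhat j))"
    by (simp add: sum_distrib_left mult_ac)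
  moreover have "(1 / real n) ^ (n - 1) * Q / ((1 / real n) ^ n * K) = real n * Q / K" for Q K
    using n0 by (cases n) simp_all
  ultimately show ?thesis
    by simp
qed

lemma S_W_has_real_derivative:
  assumes "\<And>j. j < n \<Longrightarrow> ((\<lambda>\<epsilon>. w \<epsilon> j) has_real_derivative w' j) (at 0)"
    and "\<And>j. j < n \<Longrightarrow> ((\<lambda>\<epsilon>. yOOB_W n yhat (w \<epsilon>) j) has_real_derivative r' j) (at 0)"
    and "\<And>j. j < n \<Longrightarrow> (loss (y j) has_real_derivative L' j) (at (yOOB_W n yhat (w 0) j))"
  shows "((\<lambda>\<epsilon>. S_W n loss y yhat (w \<epsilon>)) has_real_derivative
           (\<Sum>j<n. w' j * loss (y j) (yOOB_W n yhat (w 0) j) + w 0 j * (L' j * r' j))) (at 0)"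
proof -
  have "((\<lambda>\<epsilon>. w \<epsilon> j * loss (y j) (yOOB_W n yhat (w \<epsilon>) j)) has_real_derivative
          w' j * loss (y j) (yOOB_W n yhat (w 0) j) + w 0 j * (L' j * r' j)) (at 0)" if "j < n" for j
    using DERIV_mult[OF assms(1) DERIV_chain2[OF assms(3) assms(2)]] that
    by (simp add: mult.commute)
  then show ?thesis
    unfolding S_W_eq_yOOB_W by (intro DERIV_sum) auto
qed

theorem theorem2:
  fixes n :: nat and i :: nat
    and loss loss' :: "real \<Rightarrow> real \<Rightarrow> real"
    and y :: "nat \<Rightarrow> real"
    and yhat :: "(nat \<Rightarrow> nat) \<Rightarrow> nat \<Rightarrow> real"
  assumes n2: "n \<ge> 2"
    and i_lt: "i < n"
    and loss_cont: "continuous_on UNIV (\<lambda>(a, b). loss a b)"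
    and loss_deriv: "\<forall>j<n. (loss (y j) has_real_derivative loss' (y j) (yOOB n yhat j))
                              (at (yOOB n yhat j))"
  shows "((\<lambda>\<epsilon>. S_W n loss y yhat (W_eps n i \<epsilon>)) has_real_derivative
           real n *
           ((1 / real n) * (loss (y i) (yOOB n yhat i)
                 - (1 / real n) * (\<Sum>j<n. loss (y j) (yOOB n yhat j)))
            + ((1 - 1 / real n) powr (- real n)) / real n *
              (\<Sum>j<n. loss' (y j) (yOOB n yhat j) *
                 ((1 / real (n ^ n)) *
                  (\<Sum>b\<in>boot n. (real (Ncount n b i) - 1) * Iout n b j *
                                  (yhat b j - yOOB n yhat j))))))
         (at 0)"
proof -
  have n0: "n > 0"
    using n2 by simp
  define L where "L j = loss (y j) (yOOB n yhat j)" for j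
  define L' where "L' j = loss' (y j) (yOOB n yhat j)" for j
  define Q where "Q j = (\<Sum>b\<in>boot n. (real (Ncount n b i) - 1) * Iout n b j * (yhat b j - yOOB n yhat j))"
    for j
  have loss_deriv_0: "(loss (y j) has_real_derivative L' j) (at (yOOB_W n yhat (W_eps n i 0) j))"
    if "j < n" for j
    using loss_deriv that by (simp add: yOOB_W_W_eps_0[OF n0] L'_def)
  have "((\<lambda>\<epsilon>. S_W n loss y yhat (W_eps n i \<epsilon>)) has_real_derivative
          (\<Sum>j<n. ((if j = i then 1 else 0) - 1 / real n) * L j
             + 1 / real n * (L' j * (real n * Q j / real (n - 1) ^ n)))) (at 0)"
    using S_W_has_real_derivative[OF W_eps_has_real_derivative
          yOOB_W_W_eps_has_real_derivative[OF n2] loss_deriv_0]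
    by (simp only: yOOB_W_W_eps_0[OF n0] L_def[symmetric] Q_def[symmetric]) (simp add: W_eps_0)
  also have "(\<Sum>j<n. ((if j = i then 1 else 0) - 1 / real n) * L j
             + 1 / real n * (L' j * (real n * Q j / real (n - 1) ^ n)))
    = L i - 1 / real n * (\<Sum>j<n. L j) + (\<Sum>j<n. L' j * Q j) / real (n - 1) ^ n"
    using n0 i_lt by (simp add: sum.distrib left_diff_distrib sum_subtractf sum_distrib_left
        sum_divide_distrib if_distrib[of "\<lambda>x. x * _"])
  also have "\<dots> = real n * ((1 / real n) * (L i - (1 / real n) * (\<Sum>j<n. L j))
      + ((1 - 1 / real n) powr (- real n)) / real n * (\<Sum>j<n. L' j * ((1 / real (n ^ n)) * Q j)))"
    unfolding one_minus_inverse_powr_minus[OF n2]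
    using n0 by (simp add: field_simps flip: sum_divide_distrib)
  finally show ?thesis
    unfolding L_def L'_def Q_def .
qed

end
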